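(* For $\theta\in[0,\pi)$ let $N_\theta$ be the image of the perimeter (boundary) of the square $[-1,1]^2$ under the anticlockwise rotation by angle $\theta$ about the origin. There exists a set $A\subset\mathbb{R}^2$ of positive Lebesgue measure such that, simultaneously for all $\theta\in[0,\pi)$, the set $A+N_\theta$ has empty interior.
   Context: $X+Y=\{x+y:x\in X,y\in Y\}$. *)

theory Defs
  imports "HOL-Analysis.Analysis"
begin

definition rot :: "real \<Rightarrow> real^2 \<Rightarrow> real^2" where
  "rot th x = vector [cos th * x$1 - sin th * x$2, sin th * x$1 + cos th * x$2]"

definition N :: "real \<Rightarrow> (real^2) set" where
  "N th = rot th ` frontier (cbox (vector [-1, -1]) (vector [1, 1]))"

definition msum :: "(real^2) set \<Rightarrow> (real^2) set \<Rightarrow> (real^2) set" where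
  "msum X Y = {x + y | x y. x \<in> X \<and> y \<in> Y}"

end

theory Submission
  imports Defs
begin

text \<open>
  Let U be an open set of small measure containing, for every slope u in [-1,1] and a dense set of
  offsets t, the segment {(t + u y, y) | 0 <= y <= 1}, and remove U and its mirror image in the
  diagonal from the unit square. The remaining compact set A misses a dense family of lines in
  each direction, so every orthogonal projection of A is closed with empty interior. In the
  frame rotated by th each point of N th has a coordinate equal to 1 or -1, so A + N th lies in
  the union of two closed sets with empty interior: the points whose coordinate along one of the
  two rotated axes differs by 1 from that of a point of A.

  The open sets are built as in Kakeya-type constructions: cut the unit height into M strips and
  obtain the segment of slope u in stage j+1 from the segment of the slope rounded to a grid of
  K^(j+1) slopes by turning it about its point in the middle of strip j. Then in strip j all final
  segments lie near K^(j+1)+1 segments of stage j, so the strip is covered by thin parallelograms of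
  total area O(1/M^2).
\<close>

lemma abs_mult_le_left: "\<bar>h\<bar> \<le> 1 \<Longrightarrow> \<bar>a * h\<bar> \<le> \<bar>a::real\<bar>"
  by (simp add: abs_mult mult_left_le)

lemma measure_cbox_cart2:
  assumes "a$1 \<le> b$1" "a$2 \<le> b$2"
  shows "measure lebesgue (cbox a b :: (real^2) set) = (b$1 - a$1) * (b$2 - a$2)"
proof -
  have "a \<in> cbox a b"
    using assms by (simp add: mem_box_cart forall_2)
  then have "cbox a b \<noteq> {}"
    by blast
  then show ?thesis
    by (simp add: content_cbox_cart UNIV_2)
qed

lemma
  assumes "\<And>i. A i \<in> fmeasurable M" "\<And>i. measure M (A i) \<le> e / 2 ^ Suc i"
  shows fmeasurable_UN_geometric: "(\<Union>i. A i) \<in> fmeasurable M"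
    and measure_UN_geometric_le: "measure M (\<Union>i. A i) \<le> e"
proof -
  have nonneg: "0 \<le> e / 2 ^ Suc n" for n
    by (rule order_trans[OF measure_nonneg assms(2)])
  have "measure M (\<Union>i\<le>n. A i) \<le> e" for n
  proof -
    have "measure M (\<Union>i\<le>n. A i) \<le> (\<Sum>i\<le>n. measure M (A i))"
      using assms(1) by (intro measure_UNION_le) auto
    also have "\<dots> \<le> (\<Sum>i\<le>n. e / 2 ^ Suc i)"
      using assms(2) by (intro sum_mono)
    also have "\<dots> = e - e / 2 ^ Suc n"
      by (induction n) (simp_all add: field_simps)
    also have "\<dots> \<le> e"
      using nonneg[of n] by linarith
    finally show ?thesis .
  qed
  then show "(\<Union>i. A i) \<in> fmeasurable M" "measure M (\<Union>i. A i) \<le> e"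
    using fmeasurable_countable_Union[of A M e] measure_countable_Union_le[of A M e] assms(1) by auto
qed

lemma interior_inner_vimage_empty:
  fixes n :: "'a::euclidean_space"
  assumes "n \<noteq> 0" "interior F = {}"
  shows "interior ((\<lambda>p. p \<bullet> n) -` F) = {}"
proof -
  have "linear (\<lambda>p. p \<bullet> n)"
    by (simp add: bounded_linear.linear bounded_linear_inner_left)
  moreover have "surj (\<lambda>p. p \<bullet> n)"
    by (rule surjI[of _ "\<lambda>s. (s / (n \<bullet> n)) *\<^sub>R n"]) (use assms(1) in simp)
  ultimately have "open ((\<lambda>p. p \<bullet> n) ` interior ((\<lambda>p. p \<bullet> n) -` F))"
    by (intro open_surjective_linear_image) auto
  moreover have "(\<lambda>p. p \<bullet> n) ` interior ((\<lambda>p. p \<bullet> n) -` F) \<subseteq> F"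
    using interior_subset by fastforce
  ultimately have "(\<lambda>p. p \<bullet> n) ` interior ((\<lambda>p. p \<bullet> n) -` F) \<subseteq> interior F"
    by (simp add: interior_maximal)
  then show ?thesis
    using assms(2) by blast
qed

lemma
  fixes P :: "'a::real_normed_vector set"
  assumes "closed P" "interior P = {}"
  shows closed_Un_translations: "closed ((+) a ` P \<union> (+) b ` P)"
    and interior_Un_translations: "interior ((+) a ` P \<union> (+) b ` P) = {}"
proof -
  have "closed ((+) c ` P)" "interior ((+) c ` P) = {}" for c
    using assms by (simp_all add: closed_translation interior_translation)
  then show "closed ((+) a ` P \<union> (+) b ` P)" "interior ((+) a ` P \<union> (+) b ` P) = {}"
    by (simp_all add: closed_Un interior_closed_Un_empty_interior)
qed

section \<open>Open sets of small measure containing segments of every slope\<close>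

definition slope_segment :: "real \<Rightarrow> real \<Rightarrow> (real^2) set" where
  "slope_segment t u = (\<lambda>y. vector [t + u * y, y]) ` {0..1}"

definition sheared_box :: "real \<Rightarrow> real \<Rightarrow> real \<Rightarrow> real \<Rightarrow> real \<Rightarrow> (real^2) set" where
  "sheared_box x0 c y0 T W = {p. \<bar>p$2 - y0\<bar> < T \<and> \<bar>p$1 - x0 - c * p$2\<bar> < W}"

lemma open_sheared_box: "open (sheared_box x0 c y0 T W)"
  unfolding sheared_box_def by (intro open_Collect_conj open_Collect_less continuous_intros)

lemma sheared_box_lmeasurable:
  assumes "T > 0" "W > 0"
  shows "sheared_box x0 c y0 T W \<in> lmeasurable" "measure lebesgue (sheared_box x0 c y0 T W) \<le> 4 * T * W"
proof -
  define L :: "real^2 \<Rightarrow> real^2" where "L q = vector [q$1 + c * q$2, q$2]" for q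
  have "linear L"
    unfolding L_def by (intro linearI) (auto simp: vec_eq_iff forall_2 algebra_simps)
  have "matrix L = (vector [vector [1, c], vector [0, 1]] :: real^2^2)"
    by (auto simp: matrix_def L_def vec_eq_iff forall_2 axis_def)
  then have det: "det (matrix L) = 1"
    by (simp add: det_2)
  define B :: "(real^2) set" where "B = cbox (vector [-W, -T]) (vector [W, T])"
  have "measure lebesgue B = 4 * T * W"
    using assms measure_cbox_cart2[of "vector [-W, -T]" "vector [W, T]"] by (simp add: B_def)
  moreover have "B \<in> lmeasurable"
    by (simp add: B_def)
  ultimately have LB: "L ` B \<in> lmeasurable" "measure lebesgue (L ` B) = 4 * T * W"
    using measurable_linear_image[OF \<open>linear L\<close> \<open>B \<in> lmeasurable\<close>]
      measure_linear_image[OF \<open>linear L\<close> \<open>B \<in> lmeasurable\<close>] det by auto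
  define v :: "real^2" where "v = vector [x0 + c * y0, y0]"
  have vLB: "(+) v ` L ` B \<in> lmeasurable" "measure lebesgue ((+) v ` L ` B) = 4 * T * W"
    using measurable_translation[OF LB(1), of v] measure_translation[of v "L ` B"] LB(2) by simp_all
  have sub: "sheared_box x0 c y0 T W \<subseteq> (+) v ` L ` B"
  proof
    fix p assume "p \<in> sheared_box x0 c y0 T W"
    then have "vector [p$1 - x0 - c * p$2, p$2 - y0] \<in> B"
      by (auto simp: B_def sheared_box_def mem_box_cart forall_2)
    moreover have "p = v + L (vector [p$1 - x0 - c * p$2, p$2 - y0])"
      by (auto simp: v_def L_def vec_eq_iff forall_2 algebra_simps)
    ultimately show "p \<in> (+) v ` L ` B" by blast
  qed
  have "sheared_box x0 c y0 T W \<in> sets lebesgue"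
    using open_sheared_box by (simp add: borel_open)
  then show "sheared_box x0 c y0 T W \<in> lmeasurable"
    using fmeasurableI2[OF vLB(1) sub] by blast
  show "measure lebesgue (sheared_box x0 c y0 T W) \<le> 4 * T * W"
    using measure_mono_fmeasurable[OF sub \<open>_ \<in> sets lebesgue\<close> vLB(1)] vLB(2) by simp
qed

definition grid_point :: "nat \<Rightarrow> nat \<Rightarrow> real" where
  "grid_point Q k = -1 + 2 * real k / real Q"

definition grid_index :: "nat \<Rightarrow> real \<Rightarrow> nat" where
  "grid_index Q u = nat \<lfloor>(u + 1) * real Q / 2\<rfloor>"

definition grid_round :: "nat \<Rightarrow> real \<Rightarrow> real" where
  "grid_round Q u = grid_point Q (grid_index Q u)"

lemma grid_round_bounds:
  assumes "Q \<ge> 1" "-1 \<le> u" "u \<le> 1"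
  shows "grid_index Q u \<le> Q" "-1 \<le> grid_round Q u" "grid_round Q u \<le> u"
    "u - grid_round Q u < 2 / real Q"
proof -
  define x where "x = (u + 1) * real Q / 2"
  have "0 \<le> (u + 1) * real Q" "(u + 1) * real Q \<le> 2 * real Q"
    using assms by (auto intro: mult_right_mono)
  then have x: "0 \<le> x" "x \<le> real Q"
    by (simp_all add: x_def)
  then have k: "real (grid_index Q u) = of_int \<lfloor>x\<rfloor>"
    by (simp add: grid_index_def x_def)
  have u: "u = -1 + 2 * x / real Q"
    using assms by (simp add: x_def field_simps)
  have round: "grid_round Q u = -1 + 2 * of_int \<lfloor>x\<rfloor> / real Q"
    by (simp add: grid_round_def grid_point_def k)
  show "grid_index Q u \<le> Q"
    using x by (simp add: grid_index_def x_def[symmetric] nat_le_iff floor_le_iff)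
  show "-1 \<le> grid_round Q u"
    using x by (simp add: round)
  have "2 * of_int \<lfloor>x\<rfloor> / real Q \<le> 2 * x / real Q"
    by (intro divide_right_mono) auto
  then show "grid_round Q u \<le> u"
    using round u by linarith
  have "2 * x < 2 * (of_int \<lfloor>x\<rfloor> + 1)"
    using real_of_int_floor_add_one_gt[of x] by argo
  then have "2 * x / real Q < 2 * (of_int \<lfloor>x\<rfloor> + 1) / real Q"
    using assms(1) by (simp add: divide_strict_right_mono)
  then show "u - grid_round Q u < 2 / real Q"
    using round u by (simp add: add_divide_distrib distrib_left)
qed

lemma grid_round_pow_bounds:
  assumes "K \<ge> 1" "i \<le> j" "-1 \<le> u" "u \<le> 1"
  shows "-1 \<le> grid_round (K ^ Suc j) u" "grid_round (K ^ Suc j) u \<le> u"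
    "\<bar>grid_round (K ^ Suc j) u - u\<bar> \<le> 2 / real K ^ Suc i"
proof -
  have "K ^ Suc j \<ge> 1"
    using assms by simp
  note round = grid_round_bounds[OF this assms(3,4)]
  show "-1 \<le> grid_round (K ^ Suc j) u" "grid_round (K ^ Suc j) u \<le> u"
    using round by auto
  have "real K ^ Suc i \<le> real K ^ Suc j"
    using assms by (intro power_increasing) auto
  then have "2 / real K ^ Suc j \<le> 2 / real K ^ Suc i"
    using assms by (intro divide_left_mono) auto
  then show "\<bar>grid_round (K ^ Suc j) u - u\<bar> \<le> 2 / real K ^ Suc i"
    using round by simp
qed

definition strip_centre :: "nat \<Rightarrow> nat \<Rightarrow> real" where
  "strip_centre M j = (2 * real j + 1) / (2 * real M)"

lemma strip_centre_bounds:
  assumes "j < M"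
  shows "0 \<le> strip_centre M j" "strip_centre M j \<le> 1"
  using assms by (simp_all add: strip_centre_def field_simps)

context
  fixes m :: real and M K :: nat
begin

text \<open>The segment of slope u at stage j+1 is the stage-j segment of the rounded slope
  grid_round (K ^ Suc j) u, turned about its point at height strip_centre M j;
  pivot_offset j u is the abscissa at height 0 of the stage-j segment of slope u.\<close>
primrec pivot_offset :: "nat \<Rightarrow> real \<Rightarrow> real" where
  "pivot_offset 0 u = m"
| "pivot_offset (Suc j) u = pivot_offset j (grid_round (K ^ Suc j) u)
     + (grid_round (K ^ Suc j) u - u) * strip_centre M j"

lemma pivot_offset_near_start:
  assumes "K \<ge> 1" "i \<le> M" "-1 \<le> u" "u \<le> 1"
  shows "\<bar>pivot_offset i u - m\<bar> \<le> real i * (2 / real K)"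
  using assms(2-4)
proof (induction i arbitrary: u)
  case 0
  then show ?case by simp
next
  case (Suc i)
  define c where "c = grid_round (K ^ Suc i) u"
  note round = grid_round_pow_bounds[OF assms(1) le0[of i] Suc.prems(2,3), folded c_def]
  have "i < M"
    using Suc.prems(1) by simp
  then have "\<bar>(c - u) * strip_centre M i\<bar> \<le> 2 / real K"
    using round(3) strip_centre_bounds[OF \<open>i < M\<close>]
    by (intro order_trans[OF abs_mult_le_left]) auto
  moreover have "\<bar>pivot_offset i c - m\<bar> \<le> real i * (2 / real K)"
    using Suc.IH[of c] Suc.prems round by simp
  moreover have "pivot_offset (Suc i) u - m = (pivot_offset i c - m) + (c - u) * strip_centre M i"
    by (simp add: c_def)
  moreover have "real (Suc i) * (2 / real K) = real i * (2 / real K) + 2 / real K"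
    by (simp only: of_nat_Suc distrib_right mult_1)
  ultimately show ?case
    by (smt (verit) abs_triangle_ineq)
qed

text \<open>Every stage after j+1 moves the segment by at most the grid mesh 2 / K ^ Suc (Suc j),
  uniformly in the height.\<close>
lemma pivot_offset_drift:
  assumes "K \<ge> 1" "j < i" "i \<le> M" "-1 \<le> u" "u \<le> 1"
  shows "\<exists>v. -1 \<le> v \<and> v \<le> 1 \<and> (\<forall>y\<in>{0..1}.
    \<bar>pivot_offset i u + u * y - (pivot_offset (Suc j) v + v * y)\<bar> \<le> real (i - Suc j) * (2 / real K ^ Suc (Suc j)))"
  using assms(2-5)
proof (induction i arbitrary: u)
  case 0
  then show ?case by simp
next
  case (Suc i)
  show ?case
  proof (cases "i = j")
    case True
    then show ?thesis
      using Suc.prems by (intro exI[of _ u]) auto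
  next
    case False
    define c where "c = grid_round (K ^ Suc i) u"
    have ji: "Suc j \<le> i"
      using False Suc.prems by simp
    note round = grid_round_pow_bounds[OF assms(1) ji Suc.prems(3,4), folded c_def]
    obtain v where v: "-1 \<le> v" "v \<le> 1" and close: "\<And>y. y \<in> {0..1} \<Longrightarrow>
        \<bar>pivot_offset i c + c * y - (pivot_offset (Suc j) v + v * y)\<bar> \<le> real (i - Suc j) * (2 / real K ^ Suc (Suc j))"
      using Suc.IH[of c] Suc.prems round ji by auto
    have "\<bar>pivot_offset (Suc i) u + u * y - (pivot_offset (Suc j) v + v * y)\<bar>
        \<le> real (Suc i - Suc j) * (2 / real K ^ Suc (Suc j))" if y: "y \<in> {0..1}" for y
    proof -
      have "i < M"
        using Suc.prems by simp
      then have "\<bar>strip_centre M i - y\<bar> \<le> 1"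
        using strip_centre_bounds[OF \<open>i < M\<close>] y by auto
      then have "\<bar>(c - u) * (strip_centre M i - y)\<bar> \<le> 2 / real K ^ Suc (Suc j)"
        using round(3) by (intro order_trans[OF abs_mult_le_left]) auto
      moreover have "pivot_offset (Suc i) u + u * y - (pivot_offset (Suc j) v + v * y)
          = (pivot_offset i c + c * y - (pivot_offset (Suc j) v + v * y)) + (c - u) * (strip_centre M i - y)"
        by (simp add: c_def algebra_simps)
      moreover have "Suc i - Suc j = Suc (i - Suc j)"
        using ji by simp
      then have "real (Suc i - Suc j) * (2 / real K ^ Suc (Suc j))
          = real (i - Suc j) * (2 / real K ^ Suc (Suc j)) + 2 / real K ^ Suc (Suc j)"
        by (simp only: of_nat_Suc distrib_right mult_1)
      ultimately show ?thesis
        using close[OF y] by (smt (verit) abs_triangle_ineq)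
    qed
    then show ?thesis
      using v by blast
  qed
qed

definition strip_error :: "nat \<Rightarrow> real" where
  "strip_error j = 2 / real K ^ Suc j * (1 / (2 * real M) + real M / real K)"

lemma strip_error_pos: "M > 0 \<Longrightarrow> K > 0 \<Longrightarrow> strip_error j > 0"
  unfolding strip_error_def by (intro mult_pos_pos add_pos_pos divide_pos_pos) auto

text \<open>The part in strip j of a neighbourhood of the stage-j segment whose slope is the k-th grid
  slope of level j+1.\<close>
definition kakeya_box :: "nat \<Rightarrow> nat \<Rightarrow> (real^2) set" where
  "kakeya_box j k = sheared_box (pivot_offset j (grid_point (K ^ Suc j) k)) (grid_point (K ^ Suc j) k)
     (strip_centre M j) (1 / real M) (2 * strip_error j)"

definition kakeya_strip :: "nat \<Rightarrow> (real^2) set" where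
  "kakeya_strip j = (\<Union>k\<le>K ^ Suc j. kakeya_box j k)"

definition kakeya_cover :: "(real^2) set" where
  "kakeya_cover = (\<Union>j<M. kakeya_strip j)"

lemma open_kakeya_cover: "open kakeya_cover"
  unfolding kakeya_cover_def kakeya_strip_def kakeya_box_def by (intro open_UN ballI open_sheared_box)

lemma nearest_strip:
  assumes "M \<ge> 1" "y \<in> {0..1}"
  obtains j where "j < M" "\<bar>y - strip_centre M j\<bar> \<le> 1 / (2 * real M)"
proof -
  define j where "j = min (nat \<lfloor>y * real M\<rfloor>) (M - 1)"
  have "j < M"
    using assms by (simp add: j_def)
  moreover have "\<bar>2 * y * real M - (2 * real j + 1)\<bar> \<le> 1"
  proof (cases "y = 1")
    case True
    then show ?thesis
      using assms by (simp add: j_def of_nat_diff)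
  next
    case False
    then have "y * real M < real M"
      using assms by simp
    then have "\<lfloor>y * real M\<rfloor> < int M" "0 \<le> \<lfloor>y * real M\<rfloor>"
      using assms by (simp_all add: floor_less_iff)
    then have "real j = of_int \<lfloor>y * real M\<rfloor>"
      by (simp add: j_def min_def)
    then show ?thesis
      using real_of_int_floor_add_one_gt[of "y * real M"] of_int_floor_le[of "y * real M"] by argo
  qed
  moreover have "y - strip_centre M j = (2 * y * real M - (2 * real j + 1)) / (2 * real M)"
    using assms by (simp add: strip_centre_def field_simps)
  ultimately show ?thesis
    using assms that by (simp add: abs_divide divide_right_mono)
qed

lemma final_segment_near_grid_segment:
  assumes "K \<ge> 1" "j < M" "-1 \<le> u" "u \<le> 1"
  obtains k where "k \<le> K ^ Suc j" "\<And>y. y \<in> {0..1} \<Longrightarrow> \<bar>y - strip_centre M j\<bar> \<le> 1 / (2 * real M) \<Longrightarrow>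
    \<bar>pivot_offset M u + u * y - (pivot_offset j (grid_point (K ^ Suc j) k) + grid_point (K ^ Suc j) k * y)\<bar>
      \<le> strip_error j"
proof -
  obtain v where v: "-1 \<le> v" "v \<le> 1" and drift: "\<forall>y\<in>{0..1}.
      \<bar>pivot_offset M u + u * y - (pivot_offset (Suc j) v + v * y)\<bar> \<le> real (M - Suc j) * (2 / real K ^ Suc (Suc j))"
    using pivot_offset_drift[OF assms(1,2) order_refl assms(3,4)] by blast
  define Q where "Q = K ^ Suc j"
  define k where "k = grid_index Q v"
  define c where "c = grid_point Q k"
  have "Q \<ge> 1"
    using assms by (simp add: Q_def)
  note round = grid_round_bounds[OF this v, unfolded grid_round_def, folded k_def c_def]
  have "\<bar>pivot_offset M u + u * y - (pivot_offset j c + c * y)\<bar> \<le> strip_error j"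
    if y: "y \<in> {0..1}" "\<bar>y - strip_centre M j\<bar> \<le> 1 / (2 * real M)" for y
  proof -
    have "pivot_offset M u + u * y - (pivot_offset j c + c * y)
        = (pivot_offset M u + u * y - (pivot_offset (Suc j) v + v * y)) + (v - c) * (y - strip_centre M j)"
      (is "_ = ?drift + ?round")
      by (simp add: c_def k_def Q_def grid_round_def algebra_simps)
    moreover have "\<bar>?round\<bar> \<le> 2 / real Q * (1 / (2 * real M))"
      unfolding abs_mult using round y(2) by (intro mult_mono) auto
    moreover have "\<bar>?drift\<bar> \<le> 2 / real Q * (real M / real K)"
    proof -
      have "real (M - Suc j) * (2 / real K ^ Suc (Suc j)) \<le> real M * (2 / real K ^ Suc (Suc j))"
        by (intro mult_right_mono) auto
      also have "\<dots> = 2 / real Q * (real M / real K)"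
        by (simp add: Q_def field_simps)
      finally show ?thesis
        using drift y(1) by (meson order_trans)
    qed
    moreover have "strip_error j = 2 / real Q * (1 / (2 * real M)) + 2 / real Q * (real M / real K)"
      by (simp add: strip_error_def Q_def distrib_left)
    ultimately show ?thesis
      using abs_triangle_ineq[of ?drift ?round] by linarith
  qed
  moreover have "k \<le> K ^ Suc j"
    using round by (simp add: Q_def)
  ultimately show ?thesis
    using that by (simp add: c_def Q_def)
qed

lemma slope_segment_subset_kakeya_cover:
  assumes "M \<ge> 1" "K \<ge> 1" "-1 \<le> u" "u \<le> 1"
  shows "slope_segment (pivot_offset M u) u \<subseteq> kakeya_cover"
proof
  fix p assume "p \<in> slope_segment (pivot_offset M u) u"
  then obtain y where y: "y \<in> {0..1}" and p: "p = vector [pivot_offset M u + u * y, y]"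
    by (auto simp: slope_segment_def)
  obtain j where j: "j < M" and y_strip: "\<bar>y - strip_centre M j\<bar> \<le> 1 / (2 * real M)"
    using nearest_strip[OF assms(1) y] .
  obtain k where k: "k \<le> K ^ Suc j" and near: "\<bar>pivot_offset M u + u * y
      - (pivot_offset j (grid_point (K ^ Suc j) k) + grid_point (K ^ Suc j) k * y)\<bar> \<le> strip_error j"
    using final_segment_near_grid_segment[OF assms(2) j assms(3,4)] y y_strip by metis
  have "strip_error j > 0"
    using assms by (intro strip_error_pos) auto
  moreover have "\<bar>y - strip_centre M j\<bar> < 1 / real M"
    using y_strip assms(1) by (simp add: field_simps)
  ultimately have "p \<in> kakeya_box j k"
    using near by (simp add: p kakeya_box_def sheared_box_def algebra_simps)
  then show "p \<in> kakeya_cover"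
    unfolding kakeya_cover_def kakeya_strip_def using j k by blast
qed

lemma kakeya_strip_lmeasurable:
  assumes "M \<ge> 1" "real K \<ge> 2 * real M ^ 2"
  shows "kakeya_strip j \<in> lmeasurable" "measure lebesgue (kakeya_strip j) \<le> 32 / real M ^ 2"
proof -
  have M: "real M \<ge> 1"
    using assms by simp
  then have "real M * 1 \<le> real M ^ 2"
    unfolding power2_eq_square by (intro mult_left_mono) auto
  then have K: "real K \<ge> 2 * real M"
    using assms(2) by linarith
  then have box: "kakeya_box j k \<in> lmeasurable" "measure lebesgue (kakeya_box j k) \<le> 8 / real M * strip_error j"
    for k
    using sheared_box_lmeasurable[of "1 / real M" "2 * strip_error j"] strip_error_pos[of j] M
    by (auto simp: kakeya_box_def)
  then show "kakeya_strip j \<in> lmeasurable"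
    unfolding kakeya_strip_def by (intro fmeasurable.finite_UN) auto
  define Q where "Q = real K ^ Suc j"
  have "Q \<ge> 1"
    unfolding Q_def using M K by (intro one_le_power) linarith
  then have "(Q + 1) * (2 / Q) \<le> 4"
    by (simp add: field_simps)
  moreover have "1 / (2 * real M) + real M / real K \<le> 1 / real M"
    using M K assms(2) by (simp add: field_simps power2_eq_square)
  ultimately have "(Q + 1) * (2 / Q) * (1 / (2 * real M) + real M / real K) \<le> 4 * (1 / real M)"
    using M K by (intro mult_mono) auto
  moreover have "(Q + 1) * strip_error j = (Q + 1) * (2 / Q) * (1 / (2 * real M) + real M / real K)"
    unfolding strip_error_def Q_def by (simp only: mult.assoc)
  ultimately have count: "(Q + 1) * strip_error j \<le> 4 / real M"
    by simp
  have "measure lebesgue (kakeya_strip j) \<le> (\<Sum>k\<le>K ^ Suc j. measure lebesgue (kakeya_box j k))"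
    unfolding kakeya_strip_def using box by (intro measure_UNION_le) auto
  also have "\<dots> \<le> (\<Sum>k\<le>K ^ Suc j. 8 / real M * strip_error j)"
    using box by (intro sum_mono) auto
  also have "\<dots> = (Q + 1) * (8 / real M * strip_error j)"
    by (simp add: Q_def algebra_simps)
  also have "\<dots> = 8 / real M * ((Q + 1) * strip_error j)"
    by simp
  also have "\<dots> \<le> 8 / real M * (4 / real M)"
    using count M by (intro mult_left_mono) auto
  finally show "measure lebesgue (kakeya_strip j) \<le> 32 / real M ^ 2"
    by (simp add: power2_eq_square)
qed

lemma kakeya_cover_lmeasurable:
  assumes "M \<ge> 1" "real K \<ge> 2 * real M ^ 2"
  shows "kakeya_cover \<in> lmeasurable" "measure lebesgue kakeya_cover \<le> 32 / real M"
proof -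
  note strip = kakeya_strip_lmeasurable[OF assms]
  show "kakeya_cover \<in> lmeasurable"
    unfolding kakeya_cover_def using strip by (intro fmeasurable.finite_UN) auto
  have "measure lebesgue kakeya_cover \<le> (\<Sum>j<M. measure lebesgue (kakeya_strip j))"
    unfolding kakeya_cover_def using strip by (intro measure_UNION_le) auto
  also have "\<dots> \<le> (\<Sum>j<M. 32 / real M ^ 2)"
    using strip by (intro sum_mono)
  also have "\<dots> = 32 / real M"
    using assms by (simp add: power2_eq_square)
  finally show "measure lebesgue kakeya_cover \<le> 32 / real M" .
qed

end

lemma small_open_set_with_segments:
  fixes e r m :: real
  assumes "e > 0" "r > 0"
  shows "\<exists>G. open G \<and> G \<in> lmeasurable \<and> measure lebesgue G \<le> e \<and>
    (\<forall>u\<in>{-1..1}. \<exists>t. \<bar>t - m\<bar> < r \<and> slope_segment t u \<subseteq> G)"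
proof -
  define M where "M = nat \<lceil>32 / e\<rceil> + 1"
  define K where "K = nat \<lceil>2 * real M ^ 2 + 2 * real M / r\<rceil> + 1"
  have "real M \<ge> 32 / e"
    unfolding M_def by linarith
  moreover have "M \<ge> 1"
    by (simp add: M_def)
  ultimately have M: "M \<ge> 1" "32 / real M \<le> e"
    using assms by (simp_all add: field_simps)
  have "real K > 2 * real M ^ 2 + 2 * real M / r"
    unfolding K_def by linarith
  moreover have "2 * real M / r > 0" "2 * real M ^ 2 \<ge> 0"
    using M assms by simp_all
  moreover have "K \<ge> 1"
    by (simp add: K_def)
  ultimately have K: "K \<ge> 1" "real K \<ge> 2 * real M ^ 2" "2 * real M / r < real K"
    by linarith+
  then have "real M * (2 / real K) < r"
    using assms by (simp add: field_simps)
  show ?thesis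
  proof (intro exI[of _ "kakeya_cover m M K"] conjI ballI)
    show "open (kakeya_cover m M K)"
      by (rule open_kakeya_cover)
    show "kakeya_cover m M K \<in> lmeasurable" "measure lebesgue (kakeya_cover m M K) \<le> e"
      using kakeya_cover_lmeasurable[OF M(1) K(2), of m] M(2) by auto
    fix u :: real assume "u \<in> {-1..1}"
    then show "\<exists>t. \<bar>t - m\<bar> < r \<and> slope_segment t u \<subseteq> kakeya_cover m M K"
      using pivot_offset_near_start[OF K(1) order_refl] slope_segment_subset_kakeya_cover[OF M(1) K(1)] \<open>real M * (2 / real K) < r\<close>
      by (meson atLeastAtMost_iff order_le_less_trans)
  qed
qed

lemma small_open_set_with_dense_segments:
  assumes "e > 0"
  obtains U where "open U" "U \<in> lmeasurable" "measure lebesgue U \<le> e"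
    "\<And>u c r. u \<in> {-1..1} \<Longrightarrow> r > 0 \<Longrightarrow> \<exists>t. \<bar>t - c\<bar> < r \<and> slope_segment t u \<subseteq> U"
proof -
  define centre :: "nat \<Rightarrow> real" where "centre i = of_rat (fst (from_nat i :: rat \<times> nat))" for i
  define radius :: "nat \<Rightarrow> real" where "radius i = 1 / real (Suc (snd (from_nat i :: rat \<times> nat)))" for i
  have "\<forall>i. \<exists>G. open G \<and> G \<in> lmeasurable \<and> measure lebesgue G \<le> e / 2 ^ Suc i \<and>
      (\<forall>u\<in>{-1..1}. \<exists>t. \<bar>t - centre i\<bar> < radius i \<and> slope_segment t u \<subseteq> G)"
    using small_open_set_with_segments assms by (simp add: radius_def)
  then obtain G where "\<forall>i. open (G i) \<and> G i \<in> lmeasurable \<and> measure lebesgue (G i) \<le> e / 2 ^ Suc i \<and>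
      (\<forall>u\<in>{-1..1}. \<exists>t. \<bar>t - centre i\<bar> < radius i \<and> slope_segment t u \<subseteq> G i)"
    by (auto dest: choice)
  then have G: "\<And>i. open (G i)" "\<And>i. G i \<in> lmeasurable" "\<And>i. measure lebesgue (G i) \<le> e / 2 ^ Suc i"
    and segments: "\<And>i u. u \<in> {-1..1} \<Longrightarrow> \<exists>t. \<bar>t - centre i\<bar> < radius i \<and> slope_segment t u \<subseteq> G i"
    by blast+
  have "(\<Union>i. G i) \<in> lmeasurable" "measure lebesgue (\<Union>i. G i) \<le> e"
    using fmeasurable_UN_geometric[OF G(2,3)] measure_UN_geometric_le[OF G(2,3)] by auto
  moreover have "\<exists>t. \<bar>t - c\<bar> < r \<and> slope_segment t u \<subseteq> (\<Union>i. G i)"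
    if "u \<in> {-1..1}" "r > 0" for u c r
  proof -
    obtain q where q: "c - r / 2 < of_rat q" "of_rat q < c + r / 2"
      using of_rat_dense[of "c - r / 2" "c + r / 2"] \<open>r > 0\<close> by auto
    obtain k where k: "inverse (real (Suc k)) < r / 2"
      using reals_Archimedean[of "r / 2"] \<open>r > 0\<close> by auto
    define i where "i = to_nat (q, k)"
    obtain t where t: "\<bar>t - centre i\<bar> < radius i" and "slope_segment t u \<subseteq> G i"
      using segments[OF \<open>u \<in> {-1..1}\<close>] by blast
    moreover have "centre i = of_rat q" "radius i = inverse (real (Suc k))"
      by (simp_all add: centre_def radius_def i_def inverse_eq_divide)
    then have "\<bar>t - c\<bar> < r"
      using t q k by (simp add: abs_less_iff)
    ultimately show ?thesis
      by blast
  qed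
  ultimately show ?thesis
    using that[of "\<Union>i. G i"] G(1) by blast
qed

section \<open>Sets whose projections are nowhere dense\<close>

definition coord_swap :: "real^2 \<Rightarrow> real^2" where
  "coord_swap p = vector [p$2, p$1]"

lemma coord_swap_coord_swap [simp]: "coord_swap (coord_swap p) = p"
  by (simp add: coord_swap_def vec_eq_iff forall_2)

lemma linear_coord_swap: "linear coord_swap"
  unfolding coord_swap_def by (intro linearI) (auto simp: vec_eq_iff forall_2)

lemma coord_swap_image_eq_vimage: "coord_swap ` S = coord_swap -` S"
  by (auto simp: image_iff) (metis coord_swap_coord_swap)

lemma open_coord_swap_image: "open S \<Longrightarrow> open (coord_swap ` S)"
  unfolding coord_swap_image_eq_vimage
  using linear_coord_swap by (intro continuous_open_vimage linear_continuous_at) (auto simp: linear_conv_bounded_linear)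

lemma coord_swap_image_lmeasurable:
  assumes "S \<in> lmeasurable"
  shows "coord_swap ` S \<in> lmeasurable" "measure lebesgue (coord_swap ` S) = measure lebesgue S"
proof -
  have "matrix coord_swap = (vector [vector [0, 1], vector [1, 0]] :: real^2^2)"
    by (auto simp: matrix_def coord_swap_def vec_eq_iff forall_2 axis_def)
  then have "\<bar>det (matrix coord_swap)\<bar> = 1"
    by (simp add: det_2)
  then show "coord_swap ` S \<in> lmeasurable" "measure lebesgue (coord_swap ` S) = measure lebesgue S"
    using measurable_linear_image[OF linear_coord_swap assms] measure_linear_image[OF linear_coord_swap assms]
    by simp_all
qed

lemma inner_coord_swap: "coord_swap a \<bullet> vector [x, y] = a \<bullet> vector [y, x]"
  by (simp add: coord_swap_def inner_vec_def sum_2 algebra_simps)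

lemma mem_unit_square: "(p :: real^2) \<in> cbox 0 1 \<longleftrightarrow> p$1 \<in> {0..1} \<and> p$2 \<in> {0..1}"
  by (simp add: mem_box_cart forall_2)

text \<open>The level line a \<bullet> (cs, sn) = cs * t meets the unit square inside slope_segment t (- sn / cs).\<close>
lemma interior_inner_image_empty:
  assumes "A \<subseteq> cbox 0 1"
    and avoid: "\<And>u c r. u \<in> {-1..1} \<Longrightarrow> r > 0 \<Longrightarrow> \<exists>t. \<bar>t - c\<bar> < r \<and> slope_segment t u \<inter> A = {}"
    and "cs \<noteq> 0" "\<bar>sn\<bar> \<le> \<bar>cs\<bar>"
  shows "interior ((\<lambda>a. a \<bullet> vector [cs, sn]) ` A) = {}"
proof (rule ccontr)
  assume "interior ((\<lambda>a. a \<bullet> vector [cs, sn]) ` A) \<noteq> {}"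
  then obtain s0 where "s0 \<in> interior ((\<lambda>a. a \<bullet> vector [cs, sn]) ` A)"
    by blast
  then obtain e where "e > 0" and ball: "ball s0 e \<subseteq> (\<lambda>a. a \<bullet> vector [cs, sn]) ` A"
    unfolding mem_interior by blast
  define u where "u = - sn / cs"
  have "\<bar>u\<bar> \<le> 1"
    using assms(3,4) by (simp add: u_def abs_divide divide_le_eq_1)
  then have "u \<in> {-1..1}"
    by auto
  then obtain t where t: "\<bar>t - s0 / cs\<bar> < e / \<bar>cs\<bar>" and disjoint: "slope_segment t u \<inter> A = {}"
    using avoid[of u "e / \<bar>cs\<bar>" "s0 / cs"] \<open>e > 0\<close> assms(3) by auto
  have "\<bar>cs * t - s0\<bar> = \<bar>cs\<bar> * \<bar>t - s0 / cs\<bar>"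
    using assms(3) by (simp add: abs_mult[symmetric] algebra_simps)
  also have "\<dots> < e"
    using t assms(3) by (simp add: field_simps)
  finally have "cs * t \<in> ball s0 e"
    by (simp add: dist_real_def abs_minus_commute)
  then obtain a where a: "a \<in> A" "cs * t = a \<bullet> vector [cs, sn]"
    using ball by blast
  then have "a = vector [t + u * a$2, a$2]"
    using assms(3) by (simp add: u_def inner_vec_def sum_2 vec_eq_iff forall_2 field_simps)
  moreover have "a$2 \<in> {0..1}"
    using a assms(1) mem_unit_square by blast
  ultimately have "a \<in> slope_segment t u"
    unfolding slope_segment_def by (rule image_eqI)
  then show False
    using a disjoint by blast
qed

lemma interior_inner_image_empty_all_directions:
  assumes "A \<subseteq> cbox 0 1" "coord_swap ` A = A"
    and avoid: "\<And>u c r. u \<in> {-1..1} \<Longrightarrow> r > 0 \<Longrightarrow> \<exists>t. \<bar>t - c\<bar> < r \<and> slope_segment t u \<inter> A = {}"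
    and "n \<noteq> 0"
  shows "interior ((\<lambda>a. a \<bullet> n) ` A) = {}"
proof -
  have n: "n = vector [n$1, n$2]"
    by (simp add: vec_eq_iff forall_2)
  show ?thesis
  proof (cases "\<bar>n$2\<bar> \<le> \<bar>n$1\<bar>")
    case True
    moreover have "n$1 \<noteq> 0"
      using True \<open>n \<noteq> 0\<close> by (auto simp: vec_eq_iff forall_2)
    ultimately show ?thesis
      using interior_inner_image_empty[OF assms(1) avoid] n by metis
  next
    case False
    have "(\<lambda>a. a \<bullet> n) ` A = (\<lambda>a. a \<bullet> vector [n$2, n$1]) ` coord_swap ` A"
      by (subst n) (simp add: image_image inner_coord_swap)
    then show ?thesis
      using interior_inner_image_empty[OF assms(1) avoid, of "n$2" "n$1"] False assms(2) by auto
  qed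
qed

lemma square_subset_avoiding_dense_segments:
  obtains A where "compact A" "A \<subseteq> cbox 0 1" "coord_swap ` A = A" "measure lebesgue A \<ge> 1 / 2"
    "\<And>u c r. u \<in> {-1..1} \<Longrightarrow> r > 0 \<Longrightarrow> \<exists>t. \<bar>t - c\<bar> < r \<and> slope_segment t u \<inter> A = {}"
proof -
  obtain U where U: "open U" "U \<in> lmeasurable" "measure lebesgue U \<le> 1 / 4"
    and segments: "\<And>u c r. u \<in> {-1..1} \<Longrightarrow> r > 0 \<Longrightarrow> \<exists>t. \<bar>t - c\<bar> < r \<and> slope_segment t u \<subseteq> U"
    using small_open_set_with_dense_segments[of "1 / 4"] by auto
  define V where "V = U \<union> coord_swap ` U"
  define A where "A = cbox 0 1 - V"
  have "open V"
    using U(1) by (simp add: V_def open_Un open_coord_swap_image)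
  then have "compact A"
    by (simp add: A_def compact_diff)
  have "coord_swap -` cbox 0 1 = cbox 0 1"
    by (auto simp: coord_swap_def mem_unit_square)
  moreover have "coord_swap -` V = V"
    by (auto simp: V_def coord_swap_image_eq_vimage)
  ultimately have "coord_swap ` A = A"
    by (simp add: A_def coord_swap_image_eq_vimage vimage_Diff)
  have "V \<in> lmeasurable" "measure lebesgue V \<le> measure lebesgue U + measure lebesgue (coord_swap ` U)"
    using U(2) coord_swap_image_lmeasurable[OF U(2)] measure_Un_le[of U lebesgue "coord_swap ` U"]
    by (auto simp: V_def)
  then have "measure lebesgue V \<le> 1 / 2"
    using U(3) coord_swap_image_lmeasurable[OF U(2)] by simp
  moreover have "measure lebesgue (cbox 0 1 :: (real^2) set) = 1"
    using measure_cbox_cart2[of 0 1] by simp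
  ultimately have "measure lebesgue A \<ge> 1 / 2"
    using measure_diff_le_measure_setdiff[of "cbox 0 1" lebesgue V] \<open>V \<in> lmeasurable\<close>
    by (simp add: A_def)
  moreover have "\<exists>t. \<bar>t - c\<bar> < r \<and> slope_segment t u \<inter> A = {}"
    if u: "u \<in> {-1..1}" and r: "r > 0" for u c r
  proof -
    obtain t where "\<bar>t - c\<bar> < r" "slope_segment t u \<subseteq> U"
      using segments[OF u r] by blast
    then show ?thesis
      by (auto simp: A_def V_def)
  qed
  ultimately show ?thesis
    using that \<open>compact A\<close> \<open>coord_swap ` A = A\<close> by (simp add: A_def)
qed

section \<open>Sums with rotated square perimeters\<close>

lemma inner_rot:
  "rot th z \<bullet> vector [cos th, sin th] = z$1" "rot th z \<bullet> vector [- sin th, cos th] = z$2"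
proof -
  have "rot th z \<bullet> vector [cos th, sin th] = z$1 * (cos th * cos th + sin th * sin th)"
    "rot th z \<bullet> vector [- sin th, cos th] = z$2 * (cos th * cos th + sin th * sin th)"
    by (simp_all add: rot_def inner_vec_def sum_2 algebra_simps del: sin_cos_squared_add3)
  then show "rot th z \<bullet> vector [cos th, sin th] = z$1" "rot th z \<bullet> vector [- sin th, cos th] = z$2"
    by simp_all
qed

lemma frontier_square_coord:
  assumes "z \<in> frontier (cbox (vector [-1, -1]) (vector [1, 1]) :: (real^2) set)"
  shows "\<bar>z$1\<bar> = 1 \<or> \<bar>z$2\<bar> = 1"
  using assms unfolding frontier_cbox by (auto simp: mem_box_cart forall_2)

definition projection_offset_set :: "'a::real_inner set \<Rightarrow> 'a \<Rightarrow> 'a set" where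
  "projection_offset_set A n = (\<lambda>p. p \<bullet> n) -` ((+) 1 ` (\<lambda>a. a \<bullet> n) ` A \<union> (+) (-1) ` (\<lambda>a. a \<bullet> n) ` A)"

lemma
  fixes A :: "'a::euclidean_space set"
  assumes "compact A" "n \<noteq> 0" "interior ((\<lambda>a. a \<bullet> n) ` A) = {}"
  shows closed_projection_offset_set: "closed (projection_offset_set A n)"
    and interior_projection_offset_set: "interior (projection_offset_set A n) = {}"
proof -
  have "compact ((\<lambda>a. a \<bullet> n) ` A)"
    using assms(1) by (intro compact_continuous_image continuous_intros)
  then have "closed ((\<lambda>a. a \<bullet> n) ` A)"
    by (rule compact_imp_closed)
  note shifts = closed_Un_translations[OF this assms(3)] interior_Un_translations[OF this assms(3)]
  show "closed (projection_offset_set A n)"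
    unfolding projection_offset_set_def by (intro continuous_closed_vimage shifts(1) continuous_intros)
  show "interior (projection_offset_set A n) = {}"
    unfolding projection_offset_set_def by (intro interior_inner_vimage_empty assms(2) shifts(2))
qed

lemma msum_N_subset:
  "msum A (N th) \<subseteq>
    projection_offset_set A (vector [cos th, sin th]) \<union> projection_offset_set A (vector [- sin th, cos th])"
proof
  fix p assume "p \<in> msum A (N th)"
  then obtain a z where a: "a \<in> A" and z: "z \<in> frontier (cbox (vector [-1, -1]) (vector [1, 1]))"
    and p: "p = a + rot th z"
    by (auto simp: msum_def N_def)
  have "p \<bullet> vector [cos th, sin th] = a \<bullet> vector [cos th, sin th] + z$1"
    "p \<bullet> vector [- sin th, cos th] = a \<bullet> vector [- sin th, cos th] + z$2"
    by (simp_all add: p inner_add_left inner_rot)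
  then show "p \<in> projection_offset_set A (vector [cos th, sin th]) \<union>
      projection_offset_set A (vector [- sin th, cos th])"
    using frontier_square_coord[OF z] a by (auto simp: projection_offset_set_def abs_if split: if_splits)
qed

lemma interior_msum_N_empty:
  assumes "compact A" "\<And>n. n \<noteq> 0 \<Longrightarrow> interior ((\<lambda>a. a \<bullet> n) ` A) = {}"
  shows "interior (msum A (N th)) = {}"
proof -
  have "cos th \<noteq> 0 \<or> sin th \<noteq> 0"
    by (metis sin_cos_squared_add3 mult_zero_right add_0 zero_neq_one)
  then have nonzero: "vector [cos th, sin th] \<noteq> (0 :: real^2)" "vector [- sin th, cos th] \<noteq> (0 :: real^2)"
    by (auto simp: vec_eq_iff forall_2)
  have offsets: "closed (projection_offset_set A v)" "interior (projection_offset_set A v) = {}"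
    if "v \<noteq> 0" for v
    using closed_projection_offset_set[OF assms(1) that assms(2)[OF that]]
      interior_projection_offset_set[OF assms(1) that assms(2)[OF that]] by auto
  have "interior (msum A (N th)) \<subseteq> interior (projection_offset_set A (vector [cos th, sin th])
      \<union> projection_offset_set A (vector [- sin th, cos th]))"
    by (intro interior_mono msum_N_subset)
  also have "\<dots> = {}"
    using offsets nonzero by (simp add: interior_closed_Un_empty_interior)
  finally show ?thesis
    by blast
qed

theorem mainTheorem12:
  shows "\<exists>A :: (real^2) set. A \<in> sets lebesgue \<and> emeasure lebesgue A > 0 \<and>
           (\<forall>th \<in> {0..<pi}. interior (msum A (N th)) = {})"
proof -
  obtain A where A: "compact A" "A \<subseteq> cbox 0 1" "coord_swap ` A = A" "measure lebesgue A \<ge> 1 / 2"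
    and avoid: "\<And>u c r. u \<in> {-1..1} \<Longrightarrow> r > 0 \<Longrightarrow> \<exists>t. \<bar>t - c\<bar> < r \<and> slope_segment t u \<inter> A = {}"
    using square_subset_avoiding_dense_segments by blast
  have "A \<in> lmeasurable"
    using A(1) by (rule lmeasurable_compact)
  then have "emeasure lebesgue A > 0"
    using A(4) by (simp add: emeasure_eq_measure2)
  moreover have "interior (msum A (N th)) = {}" for th
    using interior_msum_N_empty[OF A(1) interior_inner_image_empty_all_directions[OF A(2,3) avoid]] .
  ultimately show ?thesis
    using \<open>A \<in> lmeasurable\<close> by blast
qed

end
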